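(* Let $m\ge 1$, $n\ge 1$, and for each $i\in\{1,\dots,m\}$ let $f_i:\mathbb{R}^n\to\mathbb{R}$ be differentiable, with $\nabla f_i$ being $s_i$-Lipschitz for some $s_i>0$, and $f_i$ being $c_i$-strongly convex for some $c_i>0$, i.e. $(\nabla f_i(x)-\nabla f_i(y))^{\top}(x-y)\ge c_i\|x-y\|^2$ for all $x,y\in\mathbb{R}^n$. Let $\alpha_i>0$ with $\sum_{i=1}^m\alpha_i=1$, let $\beta_i>0$, let $\delta>0$, and let $\sigma_i$ satisfy $$0<\sigma_i<\frac{\sqrt{2c_i}}{\sqrt{2c_i}+\sqrt{\beta_i}}.$$ Let $z^*$ be the unique minimizer of $\sum_{i=1}^m\alpha_i f_i(z)$ over $z\in\mathbb{R}^n$, and set $u_i^*=z^*$ and $\lambda_i^*=\nabla f_i(z^* )$ for all $i$. Given initial points $u_i^0,\lambda_i^0\in\mathbb{R}^n$ ($i\in[m]$) and $z^0\in\mathbb{R}^n$, let the sequence $\{(u^k,\lambda^k,z^k)\}_{k\ge0}$ be generated as follows: for $k\ge 0$ and every $i\in[m]$, 1. $u_i^{k+1}\in\mathbb{R}^n$ is any point satisfying the inexactness criterion $\|e_i^k(u_i^{k+1})\|\le\sigma_i\|e_i^k(u_i^k)\|$, where $e_i^k(u_i)=\nabla f_i(u_i)-\lambda_i^k+\beta_i(u_i-z^k)$; 2. $\lambda_i^{k+1}=\lambda_i^k-\beta_i(u_i^{k+1}-z^k)$; 3. $z^{k+1}=\frac{1}{1+\delta}\hat z^{k+1}+\frac{\delta}{1+\delta}z^k$,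 where $\hat z^{k+1}=\frac{1}{\sum_{i=1}^m\alpha_i\beta_i}\sum_{i=1}^m\alpha_i(\beta_iu_i^{k+1}-\lambda_i^{k+1})$ (equivalently, $z^{k+1}$ minimizes $\sum_{i=1}^m\alpha_i\big(f_i(u_i^{k+1})-(\lambda_i^{k+1})^{\top}(u_i^{k+1}-z)+\frac{\beta_i}{2}\|u_i^{k+1}-z\|^2\big)+\frac{\delta}{2}\sum_{i=1}^m\alpha_i\beta_i\|z-z^k\|^2$ over $z\in\mathbb{R}^n$). Then for every $i\in[m]$, as $k\to\infty$: $\|e_i^k(u_i^{k+1})\|\to0$, $u_i^k\to u_i^*$, $\lambda_i^k\to\lambda_i^*$, and $z^k\to z^*$.
   Context: This is the convergence of the inexact federated ADMM (all clients participate in every round) applied to $\min_{u_i,z}\sum_i\alpha_if_i(u_i)$ subject to $u_i=z$ for all $i$, whose augmented Lagrangian is $L_{\alpha,\beta}(u,\lambda,z)=\sum_{i=1}^m\alpha_i\big(f_i(u_i)-\lambda_i^{\top}(u_i-z)+\frac{\beta_i}{2}\|u_i-z\|^2\big)$. The point $(u^*,\lambda^*,z^* )$ is the unique primal–dual solution of this constrained problem. $\|\cdot\|$ is the Euclidean norm and $[m]=\{1,\dots,m\}$. *)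

theory Defs
  imports "HOL-Analysis.Analysis"
begin

definition admm_err ::
  "(nat \<Rightarrow> 'a::real_vector \<Rightarrow> 'a) \<Rightarrow> (nat \<Rightarrow> real) \<Rightarrow> (nat \<Rightarrow> nat \<Rightarrow> 'a) \<Rightarrow> (nat \<Rightarrow> 'a)
     \<Rightarrow> nat \<Rightarrow> nat \<Rightarrow> 'a \<Rightarrow> 'a" where
  "admm_err grad beta lam z k i x = grad i x - lam k i + beta i *\<^sub>R (x - z k)"

end

theory Submission
  imports Defs
begin

(* With g_i = grad f_i(zs), minimality of zs gives sum_i alpha_i g_i = 0. Put
   E_i^k = grad f_i(u_i^k) - lambda_i^k, so that e_i^k(u_i^(k+1)) = E_i^(k+1), and consider
     Phi_k = sum_i alpha_i (|beta_i (z^k - zs) + lambda_i^k - g_i|^2 / beta_i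
                            + a_i |E_i^k|^2 + beta_i |u_i^k - z^k|^2) + delta B |z^k - zs|^2
   with B = sum_i alpha_i beta_i and suitable a_i > 0. Strong convexity, the inexactness
   criterion and an exact identity for the multiplier and averaging steps give
   Phi_(k+1) + D_k <= Phi_k, where D_k is a combination of |u_i^(k+1) - zs|^2, |E_i^k|^2 and
   |z^(k+1) - z^k|^2 whose weights are positive precisely because of the bound on sigma_i.
   So sum_k D_k is finite and these quantities tend to 0; lambda_i^k -> g_i then follows from
   the Lipschitz continuity of grad f_i, and z^k -> zs from the averaging step. *)

lemma sum_sq_le_weighted:
  fixes p q r t :: real
  assumes "r > 0" and "t > 0"
  shows "(p + q)^2 \<le> (r + t) * (p^2 / r + q^2 / t)"
proof -
  have "(r + t) * (p^2 / r + q^2 / t) - (p + q)^2 = (t * p - r * q)^2 / (r * t)"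
    using assms by (simp add: field_simps power2_eq_square)
  also have "\<dots> \<ge> 0" using assms by simp
  finally show ?thesis by simp
qed

(* Used with r = sqrt(2 c_i), t = sqrt(beta_i), X = |u_i^(k+1) - zs|, e = |E_i^(k+1)|,
   eps = |E_i^k| and d = |u_i^k - z^k|; the hypothesis on e is the inexactness criterion. *)
lemma scalar_descent_ineq:
  fixes r t rho X eps d e :: real
  assumes r: "r > 0" and t: "t > 0" and rho: "0 < rho" "rho < 1" and "e \<ge> 0"
    and e_le: "e \<le> rho * r / (r + t) * (eps + t^2 * d)"
  shows "r^2 * (1 - rho) * X^2 + (1 / rho - rho) / (r * t) * eps^2
       \<le> r^2 * X^2 - 2 * X * e + 1 / (rho * r * t) * eps^2 + t^2 * d^2 - 1 / (rho * r * t) * e^2"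
proof -
  have rt: "r + t > 0" using r t by simp
  have am_gm: "2 * X * e \<le> rho * r^2 * X^2 + e^2 / (rho * r^2)"
  proof -
    have "0 \<le> (rho * r^2 * X - e)^2 / (rho * r^2)" using r rho by simp
    also have "\<dots> = rho * r^2 * X^2 + e^2 / (rho * r^2) - 2 * X * e"
      using r rho by (simp add: field_simps power2_eq_square)
    finally show ?thesis by simp
  qed
  have "e^2 \<le> (rho * r / (r + t))^2 * (eps + t^2 * d)^2"
    using power_mono[OF e_le \<open>e \<ge> 0\<close>, of 2] by (simp add: power_mult_distrib power_divide)
  also have "\<dots> \<le> (rho * r / (r + t))^2 * ((r + t) * (eps^2 / r + (t^2 * d)^2 / t))"
    using sum_sq_le_weighted[OF r t] by (intro mult_left_mono) auto
  also have "\<dots> = (rho * r)^2 / (r + t) * (eps^2 / r + (t^2 * d)^2 / t)"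
    using rt by (simp add: power_divide power2_eq_square)
  finally have e_sq: "e^2 \<le> (rho * r)^2 / (r + t) * (eps^2 / r + (t^2 * d)^2 / t)" .
  have "e^2 / (rho * r^2) + e^2 / (rho * r * t) = (r + t) / (rho * r^2 * t) * e^2"
    using r t rho by (simp add: field_simps power2_eq_square)
  also have "\<dots> \<le> (r + t) / (rho * r^2 * t) * ((rho * r)^2 / (r + t) * (eps^2 / r + (t^2 * d)^2 / t))"
    using e_sq r t rho by (intro mult_left_mono) auto
  also have "\<dots> = (rho * r)^2 / (rho * r^2 * t) * (eps^2 / r + (t^2 * d)^2 / t)"
    using rt by simp
  also have "\<dots> = rho * eps^2 / (r * t) + rho * t^2 * d^2"
    using r t rho by (simp add: field_simps power2_eq_square)
  also have "\<dots> \<le> rho * eps^2 / (r * t) + t^2 * d^2"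
    using rho mult_left_le_one_le[of "t^2 * d^2" rho] by (simp add: mult.assoc)
  finally have "e^2 / (rho * r^2) + e^2 / (rho * r * t) \<le> rho * eps^2 / (r * t) + t^2 * d^2" .
  moreover have "(1 / rho - rho) / (r * t) * eps^2 = eps^2 / (rho * r * t) - rho * eps^2 / (r * t)"
    using r t rho by (simp add: field_simps)
  ultimately show ?thesis using am_gm by (simp add: algebra_simps)
qed

lemma dual_step_identity:
  fixes x y y' w w' :: "'a::real_inner" and b :: real
  assumes "b \<noteq> 0" and y': "y' = y - b *\<^sub>R (x - w)"
  shows "(norm (b *\<^sub>R w + y))^2 / b - (norm (b *\<^sub>R w' + y'))^2 / b
       = 2 * (x \<bullet> y') + b * (norm (x - w'))^2 + 2 * (w' \<bullet> (b *\<^sub>R x - y' - b *\<^sub>R w'))"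
proof -
  have "b *\<^sub>R w + y = y' + b *\<^sub>R x" using y' by (simp add: algebra_simps)
  then show ?thesis
    using \<open>b \<noteq> 0\<close> unfolding power2_norm_eq_inner
    by (simp add: inner_add_left inner_add_right inner_diff_left inner_diff_right
        inner_commute field_simps power2_eq_square)
qed

lemma averaged_dual_step_identity:
  fixes x y y' :: "nat \<Rightarrow> 'a::real_inner" and w w' :: 'a
    and alpha beta :: "nat \<Rightarrow> real" and delta B :: real
  assumes "\<And>i. i < m \<Longrightarrow> beta i \<noteq> 0"
    and y': "\<And>i. i < m \<Longrightarrow> y' i = y i - beta i *\<^sub>R (x i - w)"
    and w': "(\<Sum>i<m. alpha i *\<^sub>R (beta i *\<^sub>R x i - y' i)) = ((1 + delta) * B) *\<^sub>R w' - (delta * B) *\<^sub>R w"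
    and B: "B = (\<Sum>i<m. alpha i * beta i)"
  shows "((\<Sum>i<m. alpha i * ((norm (beta i *\<^sub>R w + y i))^2 / beta i)) + delta * B * (norm w)^2)
       - ((\<Sum>i<m. alpha i * ((norm (beta i *\<^sub>R w' + y' i))^2 / beta i)) + delta * B * (norm w')^2)
       = (\<Sum>i<m. alpha i * (2 * (x i \<bullet> y' i) + beta i * (norm (x i - w'))^2))
         + delta * B * (norm (w' - w))^2"
proof -
  have inner_avg: "(\<Sum>i<m. alpha i * (w' \<bullet> (beta i *\<^sub>R x i - y' i - beta i *\<^sub>R w')))
      = w' \<bullet> ((\<Sum>i<m. alpha i *\<^sub>R (beta i *\<^sub>R x i - y' i)) - B *\<^sub>R w')"
    by (simp add: B inner_sum_right inner_diff_right scaleR_sum_left sum_subtractf sum.distrib algebra_simps)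
  have "(\<Sum>i<m. alpha i * ((norm (beta i *\<^sub>R w + y i))^2 / beta i))
        - (\<Sum>i<m. alpha i * ((norm (beta i *\<^sub>R w' + y' i))^2 / beta i))
      = (\<Sum>i<m. alpha i * (2 * (x i \<bullet> y' i) + beta i * (norm (x i - w'))^2
                   + 2 * (w' \<bullet> (beta i *\<^sub>R x i - y' i - beta i *\<^sub>R w'))))"
    unfolding sum_subtractf[symmetric] right_diff_distrib[symmetric]
    using dual_step_identity[OF assms(1) y'] by (intro sum.cong) auto
  also have "\<dots> = (\<Sum>i<m. alpha i * (2 * (x i \<bullet> y' i) + beta i * (norm (x i - w'))^2))
      + 2 * (\<Sum>i<m. alpha i * (w' \<bullet> (beta i *\<^sub>R x i - y' i - beta i *\<^sub>R w')))"
    by (simp add: distrib_left sum.distrib sum_distrib_left mult.left_commute)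
  also have "\<dots> = (\<Sum>i<m. alpha i * (2 * (x i \<bullet> y' i) + beta i * (norm (x i - w'))^2))
      + 2 * (delta * B * (w' \<bullet> w' - w' \<bullet> w))"
    unfolding inner_avg w' by (simp add: inner_diff_right algebra_simps)
  finally show ?thesis
    unfolding power2_norm_eq_inner
    by (simp add: inner_diff_left inner_diff_right inner_commute algebra_simps)
qed

lemma tendsto_zero_if_weighted_sq_le:
  fixes v :: "nat \<Rightarrow> 'a::real_normed_vector"
  assumes "w > 0" and le: "\<And>k. w * (norm (v k))^2 \<le> D k" and "D \<longlonglongrightarrow> 0"
  shows "v \<longlonglongrightarrow> 0"
proof (rule Lim_null_comparison)
  show "\<forall>\<^sub>F k in sequentially. norm (v k) \<le> sqrt (D k / w)"
  proof (intro always_eventually allI)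
    fix k
    have "(norm (v k))^2 \<le> D k / w" using le[of k] \<open>w > 0\<close> by (simp add: field_simps mult.commute)
    then show "norm (v k) \<le> sqrt (D k / w)" by (simp add: real_le_rsqrt)
  qed
  have "(\<lambda>k. sqrt (D k / w)) \<longlonglongrightarrow> sqrt (0 / w)"
    by (intro tendsto_real_sqrt tendsto_divide tendsto_const \<open>D \<longlonglongrightarrow> 0\<close>) (use \<open>w > 0\<close> in simp)
  then show "(\<lambda>k. sqrt (D k / w)) \<longlonglongrightarrow> 0" by simp
qed

lemma descent_tendsto_zero:
  fixes Phi D :: "nat \<Rightarrow> real"
  assumes descent: "\<And>k. Phi (Suc k) + D k \<le> Phi k"
    and "\<And>k. 0 \<le> Phi k" and "\<And>k. 0 \<le> D k"
  shows "D \<longlonglongrightarrow> 0"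
proof -
  have telescope: "(\<Sum>k<N. D k) + Phi N \<le> Phi 0" for N
  proof (induction N)
    case (Suc N)
    then show ?case using descent[of N] by simp
  qed simp
  then have "(\<Sum>k<N. D k) \<le> Phi 0" for N using telescope[of N] assms(2)[of N] by linarith
  then have "summable D" by (intro summableI_nonneg_bounded[where x="Phi 0"]) (use assms(3) in auto)
  then show ?thesis by (rule summable_LIMSEQ_zero)
qed

lemma weighted_gradients_sum_eq_0:
  fixes f :: "nat \<Rightarrow> 'a::real_inner \<Rightarrow> real" and grad :: "nat \<Rightarrow> 'a \<Rightarrow> 'a"
  assumes deriv: "\<And>i x. i < m \<Longrightarrow> (f i has_derivative (\<lambda>h. grad i x \<bullet> h)) (at x)"
    and min: "\<And>y. (\<Sum>i<m. alpha i * f i zs) \<le> (\<Sum>i<m. alpha i * f i y)"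
  shows "(\<Sum>i<m. alpha i *\<^sub>R grad i zs) = 0"
proof -
  let ?g = "\<Sum>i<m. alpha i *\<^sub>R grad i zs"
  have "((\<lambda>y. \<Sum>i<m. alpha i * f i y) has_derivative (\<lambda>h. \<Sum>i<m. alpha i * (grad i zs \<bullet> h))) (at zs)"
    by (intro has_derivative_sum has_derivative_mult_right) (use deriv in auto)
  then have "(\<lambda>h. \<Sum>i<m. alpha i * (grad i zs \<bullet> h)) = (\<lambda>h. 0)"
    by (rule has_derivative_local_min) (use min in simp)
  then have "(\<Sum>i<m. alpha i * (grad i zs \<bullet> ?g)) = 0" by metis
  then have "?g \<bullet> ?g = 0" by (simp add: inner_sum_left)
  then show ?thesis by simp
qed

locale inexact_fed_admm =
  fixes m :: nat
    and grad :: "nat \<Rightarrow> 'a::real_inner \<Rightarrow> 'a"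
    and s c alpha beta sigma :: "nat \<Rightarrow> real"
    and delta :: real
    and zs :: 'a
    and u lam :: "nat \<Rightarrow> nat \<Rightarrow> 'a"
    and z :: "nat \<Rightarrow> 'a"
  assumes m_pos: "m \<ge> 1"
    and lipschitz: "\<And>i x y. i < m \<Longrightarrow> norm (grad i x - grad i y) \<le> s i * norm (x - y)"
    and c_pos: "\<And>i. i < m \<Longrightarrow> c i > 0"
    and strong_conv: "\<And>i x y. i < m \<Longrightarrow> (grad i x - grad i y) \<bullet> (x - y) \<ge> c i * (norm (x - y))\<^sup>2"
    and alpha_pos: "\<And>i. i < m \<Longrightarrow> alpha i > 0"
    and beta_pos: "\<And>i. i < m \<Longrightarrow> beta i > 0"
    and delta_pos: "delta > 0"
    and sigma_pos: "\<And>i. i < m \<Longrightarrow> sigma i > 0"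
    and sigma_bound: "\<And>i. i < m \<Longrightarrow> sigma i < sqrt (2 * c i) / (sqrt (2 * c i) + sqrt (beta i))"
    and optimal: "(\<Sum>i<m. alpha i *\<^sub>R grad i zs) = 0"
    and inexact: "\<And>k i. i < m \<Longrightarrow>
          norm (admm_err grad beta lam z k i (u (Suc k) i))
            \<le> sigma i * norm (admm_err grad beta lam z k i (u k i))"
    and lam_upd: "\<And>k i. i < m \<Longrightarrow> lam (Suc k) i = lam k i - beta i *\<^sub>R (u (Suc k) i - z k)"
    and z_upd: "\<And>k. z (Suc k) =
          (1 / (1 + delta)) *\<^sub>R
            ((1 / (\<Sum>i<m. alpha i * beta i)) *\<^sub>R
               (\<Sum>i<m. alpha i *\<^sub>R (beta i *\<^sub>R u (Suc k) i - lam (Suc k) i)))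
          + (delta / (1 + delta)) *\<^sub>R z k"
begin

definition B :: real where "B = (\<Sum>i<m. alpha i * beta i)"

definition gap :: "nat \<Rightarrow> nat \<Rightarrow> 'a" where "gap k i = grad i (u k i) - lam k i"

definition r :: "nat \<Rightarrow> real" where "r i = sqrt (2 * c i)"

definition t :: "nat \<Rightarrow> real" where "t i = sqrt (beta i)"

(* With this rescaling the hypothesis on sigma_i reads rho_i < 1. *)
definition rho :: "nat \<Rightarrow> real" where "rho i = sigma i * (r i + t i) / r i"

definition gap_weight :: "nat \<Rightarrow> real" where "gap_weight i = 1 / (rho i * r i * t i)"

definition gap_rate :: "nat \<Rightarrow> real" where "gap_rate i = (1 / rho i - rho i) / (r i * t i)"

definition dist_rate :: "nat \<Rightarrow> real" where "dist_rate i = (r i)^2 * (1 - rho i)"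

definition lyap_dual :: "nat \<Rightarrow> real" where
  "lyap_dual k = (\<Sum>i<m. alpha i * ((norm (beta i *\<^sub>R (z k - zs) + (lam k i - grad i zs)))^2 / beta i))
     + delta * B * (norm (z k - zs))^2"

definition lyap :: "nat \<Rightarrow> real" where
  "lyap k = lyap_dual k + (\<Sum>i<m. alpha i * (gap_weight i * (norm (gap k i))^2 + beta i * (norm (u k i - z k))^2))"

definition client_decrease :: "nat \<Rightarrow> nat \<Rightarrow> real" where
  "client_decrease k i = dist_rate i * (norm (u (Suc k) i - zs))^2 + gap_rate i * (norm (gap k i))^2"

definition decrease :: "nat \<Rightarrow> real" where
  "decrease k = (\<Sum>i<m. alpha i * client_decrease k i) + delta * B * (norm (z (Suc k) - z k))^2"

lemma B_pos: "B > 0"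
  unfolding B_def using m_pos alpha_pos beta_pos by (intro sum_pos) (auto simp: lessThan_empty_iff)

lemma
  assumes "i < m"
  shows r_pos: "r i > 0" and t_pos: "t i > 0"
    and r_sq: "(r i)^2 = 2 * c i" and t_sq: "(t i)^2 = beta i"
  using c_pos[OF assms] beta_pos[OF assms] by (simp_all add: r_def t_def)

lemma
  assumes "i < m"
  shows rho_pos: "rho i > 0" and rho_less_1: "rho i < 1"
    and sigma_eq: "sigma i = rho i * r i / (r i + t i)"
proof -
  have r: "r i > 0" and t: "t i > 0" using r_pos t_pos assms by auto
  show "rho i > 0" unfolding rho_def using r t sigma_pos[OF assms] by simp
  have "sigma i < r i / (r i + t i)" using sigma_bound[OF assms] unfolding r_def t_def .
  then show "rho i < 1" unfolding rho_def using r t by (simp add: field_simps)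
  show "sigma i = rho i * r i / (r i + t i)" unfolding rho_def using r t by simp
qed

lemma rates_pos:
  assumes "i < m"
  shows "gap_weight i > 0" "gap_rate i > 0" "dist_rate i > 0"
  using r_pos[OF assms] t_pos[OF assms] rho_pos[OF assms] rho_less_1[OF assms]
    mult_strict_mono[of "rho i" 1 "rho i" 1]
  by (simp_all add: gap_weight_def gap_rate_def dist_rate_def field_simps)

lemma admm_err_next:
  "i < m \<Longrightarrow> admm_err grad beta lam z k i (u (Suc k) i) = gap (Suc k) i"
  unfolding admm_err_def gap_def using lam_upd by (simp add: algebra_simps)

lemma admm_err_current: "admm_err grad beta lam z k i (u k i) = gap k i + beta i *\<^sub>R (u k i - z k)"
  unfolding admm_err_def gap_def by (simp add: algebra_simps)

lemma gap_Suc_le: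
  assumes "i < m"
  shows "norm (gap (Suc k) i) \<le> rho i * r i / (r i + t i) * (norm (gap k i) + (t i)^2 * norm (u k i - z k))"
proof -
  have "norm (gap (Suc k) i) \<le> sigma i * norm (gap k i + beta i *\<^sub>R (u k i - z k))"
    using inexact[OF assms, of k] by (simp add: admm_err_next[OF assms] admm_err_current)
  also have "\<dots> \<le> sigma i * (norm (gap k i) + beta i * norm (u k i - z k))"
    using sigma_pos[OF assms] beta_pos[OF assms] norm_triangle_ineq[of "gap k i" "beta i *\<^sub>R (u k i - z k)"]
    by (intro mult_left_mono) auto
  finally show ?thesis using sigma_eq[OF assms] t_sq[OF assms] by simp
qed

lemma strong_conv_dual_lower:
  fixes k :: nat
  assumes i: "i < m"
  defines "x \<equiv> u (Suc k) i - zs"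
  shows "2 * c i * (norm x)^2 - 2 * norm x * norm (gap (Suc k) i)
         \<le> 2 * (x \<bullet> (lam (Suc k) i - grad i zs))"
proof -
  have "x \<bullet> (lam (Suc k) i - grad i zs) = x \<bullet> (grad i (u (Suc k) i) - grad i zs) - x \<bullet> gap (Suc k) i"
    by (simp add: gap_def inner_diff_right)
  moreover have "c i * (norm x)^2 \<le> x \<bullet> (grad i (u (Suc k) i) - grad i zs)"
    using strong_conv[OF i, of "u (Suc k) i" zs] by (simp add: x_def inner_commute)
  moreover have "x \<bullet> gap (Suc k) i \<le> norm x * norm (gap (Suc k) i)"
    by (rule norm_cauchy_schwarz)
  ultimately show ?thesis by linarith
qed

lemma client_descent:
  assumes "i < m"
  shows "client_decrease k i
         \<le> 2 * ((u (Suc k) i - zs) \<bullet> (lam (Suc k) i - grad i zs))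
           + gap_weight i * (norm (gap k i))^2 + beta i * (norm (u k i - z k))^2
           - gap_weight i * (norm (gap (Suc k) i))^2"
proof -
  have "client_decrease k i
      \<le> (r i)^2 * (norm (u (Suc k) i - zs))^2 - 2 * norm (u (Suc k) i - zs) * norm (gap (Suc k) i)
        + gap_weight i * (norm (gap k i))^2 + (t i)^2 * (norm (u k i - z k))^2
        - gap_weight i * (norm (gap (Suc k) i))^2"
    unfolding client_decrease_def dist_rate_def gap_rate_def gap_weight_def
    by (rule scalar_descent_ineq[OF r_pos t_pos rho_pos rho_less_1 norm_ge_zero gap_Suc_le])
       (use assms in auto)
  then show ?thesis
    using strong_conv_dual_lower[OF assms, of k] unfolding r_sq[OF assms] t_sq[OF assms] by linarith
qed

lemma z_balance:
  "(\<Sum>i<m. alpha i *\<^sub>R (beta i *\<^sub>R (u (Suc k) i - zs) - (lam (Suc k) i - grad i zs)))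
     = ((1 + delta) * B) *\<^sub>R (z (Suc k) - zs) - (delta * B) *\<^sub>R (z k - zs)"
proof -
  define S where "S = (\<Sum>i<m. alpha i *\<^sub>R (beta i *\<^sub>R u (Suc k) i - lam (Suc k) i))"
  have "((1 + delta) * B) *\<^sub>R z (Suc k) = S + (delta * B) *\<^sub>R z k"
    using z_upd[of k] delta_pos B_pos unfolding S_def B_def[symmetric] by (simp add: scaleR_add_right)
  moreover have "(\<Sum>i<m. alpha i *\<^sub>R (beta i *\<^sub>R (u (Suc k) i - zs) - (lam (Suc k) i - grad i zs)))
      = S - B *\<^sub>R zs + (\<Sum>i<m. alpha i *\<^sub>R grad i zs)"
    by (simp add: S_def B_def algebra_simps sum.distrib sum_subtractf scaleR_sum_left)
  ultimately show ?thesis using optimal by (simp add: algebra_simps)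
qed

lemma lyap_dual_diff:
  "lyap_dual k - lyap_dual (Suc k)
     = (\<Sum>i<m. alpha i * (2 * ((u (Suc k) i - zs) \<bullet> (lam (Suc k) i - grad i zs))
                          + beta i * (norm (u (Suc k) i - z (Suc k)))^2))
       + delta * B * (norm (z (Suc k) - z k))^2"
  using averaged_dual_step_identity[where x="\<lambda>i. u (Suc k) i - zs" and y="\<lambda>i. lam k i - grad i zs"
      and y'="\<lambda>i. lam (Suc k) i - grad i zs" and w="z k - zs" and w'="z (Suc k) - zs",
      OF _ _ z_balance B_def] beta_pos lam_upd
  unfolding lyap_dual_def by (fastforce simp: algebra_simps)

lemma lyap_descent: "lyap (Suc k) + decrease k \<le> lyap k"
proof -
  let ?inner = "\<lambda>i. 2 * ((u (Suc k) i - zs) \<bullet> (lam (Suc k) i - grad i zs))"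
  let ?P = "\<lambda>k i. gap_weight i * (norm (gap k i))^2 + beta i * (norm (u k i - z k))^2"
  have "(\<Sum>i<m. alpha i * client_decrease k i)
      \<le> (\<Sum>i<m. alpha i * (?inner i + beta i * (norm (u (Suc k) i - z (Suc k)))^2 + ?P k i - ?P (Suc k) i))"
  proof (intro sum_mono mult_left_mono)
    fix i assume "i \<in> {..<m}"
    then have i: "i < m" by simp
    show "alpha i \<ge> 0" using alpha_pos[OF i] by simp
    show "client_decrease k i \<le> ?inner i + beta i * (norm (u (Suc k) i - z (Suc k)))^2 + ?P k i - ?P (Suc k) i"
      using client_descent[OF i, of k] by simp
  qed
  also have "\<dots> = (\<Sum>i<m. alpha i * (?inner i + beta i * (norm (u (Suc k) i - z (Suc k)))^2))
      + (\<Sum>i<m. alpha i * ?P k i) - (\<Sum>i<m. alpha i * ?P (Suc k) i)"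
    by (simp add: sum.distrib sum_subtractf distrib_left right_diff_distrib)
  finally show ?thesis
    using lyap_dual_diff[of k] unfolding lyap_def decrease_def by linarith
qed

lemma lyap_nonneg: "lyap k \<ge> 0"
  unfolding lyap_def lyap_dual_def
  using alpha_pos beta_pos delta_pos B_pos rates_pos
  by (intro add_nonneg_nonneg sum_nonneg mult_nonneg_nonneg) (auto simp: less_imp_le)

lemma client_decrease_nonneg: "i < m \<Longrightarrow> alpha i * client_decrease k i \<ge> 0"
  unfolding client_decrease_def using alpha_pos rates_pos
  by (intro add_nonneg_nonneg mult_nonneg_nonneg) (auto simp: less_imp_le)

lemma client_decrease_le: "i < m \<Longrightarrow> alpha i * client_decrease k i \<le> decrease k"
  unfolding decrease_def using client_decrease_nonneg delta_pos B_pos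
  by (intro add_increasing2 member_le_sum) auto

lemma z_step_le: "delta * B * (norm (z (Suc k) - z k))^2 \<le> decrease k"
proof -
  have "(\<Sum>i<m. alpha i * client_decrease k i) \<ge> 0"
    by (rule sum_nonneg) (simp add: client_decrease_nonneg)
  then show ?thesis unfolding decrease_def by simp
qed

lemma decrease_tendsto_0: "decrease \<longlonglongrightarrow> 0"
proof (rule descent_tendsto_zero[where Phi = lyap])
  show "lyap (Suc k) + decrease k \<le> lyap k" "lyap k \<ge> 0" for k
    by (rule lyap_descent, rule lyap_nonneg)
  show "decrease k \<ge> 0" for k
    by (rule order_trans[OF _ z_step_le]) (use delta_pos B_pos in simp)
qed

lemma u_Suc_tendsto: "i < m \<Longrightarrow> (\<lambda>k. u (Suc k) i) \<longlonglongrightarrow> zs"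
proof -
  assume i: "i < m"
  have "(\<lambda>k. u (Suc k) i - zs) \<longlonglongrightarrow> 0"
  proof (rule tendsto_zero_if_weighted_sq_le[OF _ _ decrease_tendsto_0])
    show "alpha i * dist_rate i > 0" using alpha_pos[OF i] rates_pos[OF i] by simp
    show "alpha i * dist_rate i * (norm (u (Suc k) i - zs))^2 \<le> decrease k" for k
      using alpha_pos[OF i] rates_pos[OF i] unfolding mult.assoc
      by (intro order_trans[OF _ client_decrease_le[OF i]] mult_left_mono) (simp_all add: client_decrease_def)
  qed
  then show ?thesis by (rule LIM_zero_cancel)
qed

lemma gap_tendsto_0: "i < m \<Longrightarrow> (\<lambda>k. gap k i) \<longlonglongrightarrow> 0"
proof (rule tendsto_zero_if_weighted_sq_le[OF _ _ decrease_tendsto_0])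
  assume i: "i < m"
  show "alpha i * gap_rate i > 0" using alpha_pos[OF i] rates_pos[OF i] by simp
  show "alpha i * gap_rate i * (norm (gap k i))^2 \<le> decrease k" for k
    using alpha_pos[OF i] rates_pos[OF i] unfolding mult.assoc
    by (intro order_trans[OF _ client_decrease_le[OF i]] mult_left_mono) (simp_all add: client_decrease_def)
qed

lemma z_step_tendsto_0: "(\<lambda>k. z (Suc k) - z k) \<longlonglongrightarrow> 0"
  using delta_pos B_pos by (intro tendsto_zero_if_weighted_sq_le[OF _ z_step_le decrease_tendsto_0]) simp

lemma lam_tendsto: "i < m \<Longrightarrow> (\<lambda>k. lam k i) \<longlonglongrightarrow> grad i zs"
proof -
  assume i: "i < m"
  have u: "(\<lambda>k. u k i) \<longlonglongrightarrow> zs" using u_Suc_tendsto[OF i] by (rule LIMSEQ_imp_Suc)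
  have "(\<lambda>k. grad i (u k i) - grad i zs) \<longlonglongrightarrow> 0"
  proof (rule Lim_null_comparison)
    show "\<forall>\<^sub>F k in sequentially. norm (grad i (u k i) - grad i zs) \<le> s i * norm (u k i - zs)"
      using lipschitz[OF i] by simp
    show "(\<lambda>k. s i * norm (u k i - zs)) \<longlonglongrightarrow> 0"
      using tendsto_mult_right_zero[OF tendsto_norm_zero[OF LIM_zero[OF u]]] .
  qed
  then have "(\<lambda>k. (grad i (u k i) - grad i zs) - gap k i) \<longlonglongrightarrow> 0"
    using tendsto_diff[OF _ gap_tendsto_0[OF i]] by simp
  then show ?thesis by (simp add: gap_def LIM_zero_cancel)
qed

lemma z_tendsto: "z \<longlonglongrightarrow> zs"
proof -
  have "(\<lambda>k. (\<Sum>i<m. alpha i *\<^sub>R (beta i *\<^sub>R (u (Suc k) i - zs) - (lam (Suc k) i - grad i zs))))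
          \<longlonglongrightarrow> (\<Sum>i<m. alpha i *\<^sub>R (beta i *\<^sub>R 0 - 0))"
    using u_Suc_tendsto LIMSEQ_Suc[OF lam_tendsto]
    by (intro tendsto_sum tendsto_scaleR tendsto_diff tendsto_const) (auto intro: LIM_zero)
  then have "(\<lambda>k. B *\<^sub>R (z (Suc k) - zs) + (delta * B) *\<^sub>R (z (Suc k) - z k)) \<longlonglongrightarrow> 0"
    unfolding z_balance by (simp add: algebra_simps)
  then have "(\<lambda>k. B *\<^sub>R (z (Suc k) - zs) + (delta * B) *\<^sub>R (z (Suc k) - z k)
      - (delta * B) *\<^sub>R (z (Suc k) - z k)) \<longlonglongrightarrow> 0 - (delta * B) *\<^sub>R 0"
    by (intro tendsto_diff tendsto_scaleR tendsto_const z_step_tendsto_0)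
  then have "(\<lambda>k. B *\<^sub>R (z (Suc k) - zs)) \<longlonglongrightarrow> 0" by simp
  then have "(\<lambda>k. (1 / B) *\<^sub>R (B *\<^sub>R (z (Suc k) - zs))) \<longlonglongrightarrow> (1 / B) *\<^sub>R 0"
    by (intro tendsto_scaleR tendsto_const)
  then have "(\<lambda>k. z (Suc k)) \<longlonglongrightarrow> zs"
    using B_pos by (simp add: LIM_zero_cancel)
  then show ?thesis by (rule LIMSEQ_imp_Suc)
qed

theorem convergence:
  "\<forall>i<m. (\<lambda>k. norm (admm_err grad beta lam z k i (u (Suc k) i))) \<longlonglongrightarrow> 0
         \<and> (\<lambda>k. u k i) \<longlonglongrightarrow> zs
         \<and> (\<lambda>k. lam k i) \<longlonglongrightarrow> grad i zs
         \<and> z \<longlonglongrightarrow> zs"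
proof (intro allI impI conjI)
  fix i assume i: "i < m"
  show "(\<lambda>k. norm (admm_err grad beta lam z k i (u (Suc k) i))) \<longlonglongrightarrow> 0"
    unfolding admm_err_next[OF i] using LIMSEQ_Suc[OF gap_tendsto_0[OF i]] by (rule tendsto_norm_zero)
  show "(\<lambda>k. u k i) \<longlonglongrightarrow> zs" using u_Suc_tendsto[OF i] by (rule LIMSEQ_imp_Suc)
  show "(\<lambda>k. lam k i) \<longlonglongrightarrow> grad i zs" using i by (rule lam_tendsto)
  show "z \<longlonglongrightarrow> zs" by (rule z_tendsto)
qed

end

theorem theorem1:
  fixes m :: nat
    and f :: "nat \<Rightarrow> real ^ 'n \<Rightarrow> real"
    and grad :: "nat \<Rightarrow> real ^ 'n \<Rightarrow> real ^ 'n"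
    and s c alpha beta sigma :: "nat \<Rightarrow> real"
    and delta :: real
    and zs :: "real ^ 'n"
    and u lam :: "nat \<Rightarrow> nat \<Rightarrow> real ^ 'n"
    and z :: "nat \<Rightarrow> real ^ 'n"
  assumes m_pos: "m \<ge> 1"
    and deriv: "\<And>i x. i < m \<Longrightarrow> (f i has_derivative (\<lambda>h. grad i x \<bullet> h)) (at x)"
    and s_pos: "\<And>i. i < m \<Longrightarrow> s i > 0"
    and lipschitz: "\<And>i x y. i < m \<Longrightarrow> norm (grad i x - grad i y) \<le> s i * norm (x - y)"
    and c_pos: "\<And>i. i < m \<Longrightarrow> c i > 0"
    and strong_conv: "\<And>i x y. i < m \<Longrightarrow> (grad i x - grad i y) \<bullet> (x - y) \<ge> c i * (norm (x - y))\<^sup>2"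
    and alpha_pos: "\<And>i. i < m \<Longrightarrow> alpha i > 0"
    and alpha_sum: "(\<Sum>i<m. alpha i) = 1"
    and beta_pos: "\<And>i. i < m \<Longrightarrow> beta i > 0"
    and delta_pos: "delta > 0"
    and sigma_pos: "\<And>i. i < m \<Longrightarrow> sigma i > 0"
    and sigma_bound: "\<And>i. i < m \<Longrightarrow>
          sigma i < sqrt (2 * c i) / (sqrt (2 * c i) + sqrt (beta i))"
    and zs_min: "\<And>y. (\<Sum>i<m. alpha i * f i zs) \<le> (\<Sum>i<m. alpha i * f i y)"
    and inexact: "\<And>k i. i < m \<Longrightarrow>
          norm (admm_err grad beta lam z k i (u (Suc k) i))
            \<le> sigma i * norm (admm_err grad beta lam z k i (u k i))"
    and lam_upd: "\<And>k i. i < m \<Longrightarrow>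
          lam (Suc k) i = lam k i - beta i *\<^sub>R (u (Suc k) i - z k)"
    and z_upd: "\<And>k. z (Suc k) =
          (1 / (1 + delta)) *\<^sub>R
            ((1 / (\<Sum>i<m. alpha i * beta i)) *\<^sub>R
               (\<Sum>i<m. alpha i *\<^sub>R (beta i *\<^sub>R u (Suc k) i - lam (Suc k) i)))
          + (delta / (1 + delta)) *\<^sub>R z k"
  shows "\<forall>i<m.
           (\<lambda>k. norm (admm_err grad beta lam z k i (u (Suc k) i))) \<longlonglongrightarrow> 0
         \<and> (\<lambda>k. u k i) \<longlonglongrightarrow> zs
         \<and> (\<lambda>k. lam k i) \<longlonglongrightarrow> grad i zs
         \<and> z \<longlonglongrightarrow> zs"
proof -
  have "(\<Sum>i<m. alpha i *\<^sub>R grad i zs) = 0"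
    using deriv zs_min by (rule weighted_gradients_sum_eq_0)
  then interpret inexact_fed_admm m grad s c alpha beta sigma delta zs u lam z
    by unfold_locales (use assms in simp_all)
  show ?thesis by (rule convergence)
qed

end
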